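(* Let $A\in\mathbb{R}^{r\times n}$ ($r\le n$) have full row rank with thin SVD $A=U\Sigma V$, singular values $\sigma_1\ge\dots\ge\sigma_r>0$, and rows $V_1,\dots,V_r$ of $V$. Let $F\in\mathbb{R}^{K\times n}$ with rows $F_1,\dots,F_K$ satisfy $FA^T\ne0$, and let $\lambda'>0$. Let $D^*=FA^T(AA^T)^{-1}$ and $\tilde D^*=FA^T(AA^T+\lambda'I)^{-1}$. For $M\in\mathbb{R}^{K\times r}$ define $f(M)=\|F-MA\|_F^2$, $\epsilon(M)=f(M)/\|MA\|_F^2+1$, $\alpha(M)=\|M\|_F^2$, $\gamma(M)=\|M\|_F^2\|A\|_F^2/\|MA\|_F^2$. Let $a_i^2=\sum_{k=1}^K(F_kV_i^T)^2$ and $\Omega=\{j: a_j\neq0\}$. Then: (1) $f(\tilde D^* )>f(D^* )$; (2) $\epsilon(\tilde D^* )>\epsilon(D^* )$; (3) $\alpha(\tilde D^* )<\alpha(D^* )$; (4) if the values $\{\sigma_i\}_{i\in\Omega}$ are not all equal (in particular $|\Omega|>1$), then $\gamma(\tilde D^* )<\gamma(D^* )$, and otherwise $\gamma(\tilde D^* )=\gamma(D^* )$.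
   Context: $D^*$ minimizes $\|F-DA\|_F^2$ and $\tilde D^*$ minimizes $\|F-DA\|_F^2+\lambda'\|D\|_F^2$; $f,\epsilon,\alpha,\gamma$ are the absolute fitting error, fitting error, absolute spectral risk and spectral risk. *)

theory Defs
  imports "HOL-Analysis.Analysis"
begin

text \<open>Matrices are HOL-Analysis matrices real^'c^'r (rows indexed by 'r, columns by 'c).
The norm of such a matrix is the Euclidean norm of the vector of its rows,
i.e. the Frobenius norm.\<close>

definition frob :: "real^'c^'r \<Rightarrow> real" where
  "frob M = norm M"

definition diag_mat :: "('r::finite \<Rightarrow> real) \<Rightarrow> real^'r^'r" where
  "diag_mat s = (\<chi> i j. if i = j then s i else 0)"

definition abs_fit_err :: "real^'n^'k \<Rightarrow> real^'n^'r \<Rightarrow> real^'r^'k \<Rightarrow> real" where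
  "abs_fit_err F A M = (frob (F - M ** A))^2"

definition fit_err :: "real^'n^'k \<Rightarrow> real^'n^'r \<Rightarrow> real^'r^'k \<Rightarrow> real" where
  "fit_err F A M = abs_fit_err F A M / (frob (M ** A))^2 + 1"

definition abs_spec_risk :: "real^'r^'k \<Rightarrow> real" where
  "abs_spec_risk M = (frob M)^2"

definition spec_risk :: "real^'n^'r \<Rightarrow> real^'r^'k \<Rightarrow> real" where
  "spec_risk A M = (frob M)^2 * (frob A)^2 / (frob (M ** A))^2"

definition coef_a :: "real^'n^'k \<Rightarrow> real^'n^'r \<Rightarrow> 'r \<Rightarrow> real" where
  "coef_a F V i = sqrt (\<Sum>k\<in>UNIV. ((F $ k) \<bullet> (V $ i))^2)"

end

theory Submission
  imports Defs
begin

text \<open>In singular coordinates both estimators have the form \<open>G diag(c) U\<^sup>T\<close> with \<open>G = F V\<^sup>T\<close>,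
  whose columns have norms \<open>a\<^sub>i\<close>. Hence all four quantities are sums over the singular
  directions weighted by \<open>a\<^sub>i\<^sup>2\<close>, in which \<open>D\<^sup>*\<close> has filter factors \<open>t\<^sub>i = 1\<close> and the
  regularized estimator has \<open>t\<^sub>i = \<sigma>\<^sub>i\<^sup>2 / (\<sigma>\<^sub>i\<^sup>2 + \<lambda>')\<close> in \<open>(0,1)\<close>. Shrinking every factor raises the residual and lowers
  both norms, giving (1)--(3). For (4) the ratio \<open>\<gamma>\<close> compares \<open>\<Sum> t\<^sub>i\<^sup>2 \<sigma>\<^sub>i\<^sup>-\<^sup>2 a\<^sub>i\<^sup>2 / \<Sum> t\<^sub>i\<^sup>2 a\<^sub>i\<^sup>2\<close>
  with \<open>\<Sum> \<sigma>\<^sub>i\<^sup>-\<^sup>2 a\<^sub>i\<^sup>2 / \<Sum> a\<^sub>i\<^sup>2\<close>; since \<open>t\<^sub>i\<^sup>2\<close> increases and \<open>\<sigma>\<^sub>i\<^sup>-\<^sup>2\<close> decreases in \<open>\<sigma>\<^sub>i\<close>, this is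
  Chebyshev's sum inequality, strict unless \<open>\<sigma>\<close> is constant on the support \<open>\<Omega>\<close> of the weights.\<close>

lemma matrix_inv_eqI:
  fixes A :: "'a::semiring_1^'n^'m"
  assumes "A ** B = mat 1" "B ** A = mat 1"
  shows "matrix_inv A = B"
proof -
  have "\<exists>B'. A ** B' = mat 1 \<and> B' ** A = mat 1" using assms by blast
  then have inv: "A ** matrix_inv A = mat 1 \<and> matrix_inv A ** A = mat 1"
    unfolding matrix_inv_def by (rule someI_ex)
  have "matrix_inv A = matrix_inv A ** (A ** B)" using assms by simp
  also have "\<dots> = B" using inv by (simp add: matrix_mul_assoc)
  finally show ?thesis .
qed

lemma matrix_add_rdistrib: "((A::'a::semiring_1^'n^'m) + B) ** C = A ** C + B ** C"
  by (vector matrix_matrix_mult_def sum.distrib[symmetric] algebra_simps)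

lemma matrix_diff_rdistrib: "((A::'a::ring_1^'n^'m) - B) ** C = A ** C - B ** C"
  by (vector matrix_matrix_mult_def sum_subtractf[symmetric] algebra_simps)

lemma matrix_diff_ldistrib: "(A::'a::ring_1^'n^'m) ** (B - C) = A ** B - A ** C"
  by (vector matrix_matrix_mult_def sum_subtractf[symmetric] algebra_simps)

lemma inner_matrix_mult_right:
  fixes X :: "real^'m^'k" and Q :: "real^'n^'m" and Y :: "real^'n^'k"
  shows "inner (X ** Q) Y = inner X (Y ** transpose Q)"
  unfolding inner_vec_def matrix_matrix_mult_def transpose_def
  apply (simp add: sum_distrib_left sum_distrib_right)
  apply (rule sum.cong, simp)
  apply (subst sum.swap)
  apply (simp add: mult_ac)
  done

lemma norm_matrix_mult_orthonormal_rows: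
  fixes M :: "real^'m^'k" and Q :: "real^'n^'m"
  assumes "Q ** transpose Q = mat 1"
  shows "norm (M ** Q) = norm M"
  by (simp add: norm_eq_sqrt_inner inner_matrix_mult_right assms flip: matrix_mul_assoc)

lemma norm_sq_add_orthogonal_rows:
  fixes X :: "real^'m^'k" and Q :: "real^'n^'m" and Y :: "real^'n^'k"
  assumes "Q ** transpose Q = mat 1" and "Y ** transpose Q = 0"
  shows "(norm (X ** Q + Y))\<^sup>2 = (norm X)\<^sup>2 + (norm Y)\<^sup>2"
proof -
  have "orthogonal (X ** Q) Y" by (simp add: orthogonal_def inner_matrix_mult_right assms(2))
  then show ?thesis by (simp add: norm_add_Pythagorean norm_matrix_mult_orthonormal_rows assms(1))
qed

lemma matrix_mult_diag_mat_nth: "((G::real^'r^'k) ** diag_mat c) $ k $ i = G $ k $ i * c i"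
  unfolding diag_mat_def matrix_matrix_mult_def
  by (simp add: if_distrib[where f="\<lambda>x. _ * x"] sum.delta' cong: if_cong)

lemma diag_mat_mult: "diag_mat a ** diag_mat b = diag_mat (\<lambda>i. a i * b i)"
  by (simp add: vec_eq_iff matrix_mult_diag_mat_nth) (simp add: diag_mat_def)

lemma matrix_mult_diag_mat_mult_diag_mat:
  "M ** diag_mat a ** diag_mat b = M ** diag_mat (\<lambda>i. a i * b i)"
  by (simp add: diag_mat_mult flip: matrix_mul_assoc)

lemma transpose_diag_mat [simp]: "transpose (diag_mat a) = diag_mat a"
  by (simp add: diag_mat_def transpose_def vec_eq_iff)

lemma diag_mat_const: "diag_mat (\<lambda>_. c) = mat c"
  by (simp add: diag_mat_def mat_def)

lemma diag_mat_add_scaleR_mat: "diag_mat a + c *\<^sub>R mat 1 = diag_mat (\<lambda>i. a i + c)"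
  by (simp add: diag_mat_def mat_def vec_eq_iff)

lemma diag_mat_diff: "diag_mat a - diag_mat b = diag_mat (\<lambda>i. a i - b i)"
  by (simp add: diag_mat_def vec_eq_iff)

lemma norm_column_sq: "(norm (column i (G::real^'r^'k)))\<^sup>2 = (\<Sum>k\<in>UNIV. (G $ k $ i)\<^sup>2)"
  unfolding power2_norm_eq_inner by (simp add: inner_vec_def column_def power2_eq_square)

lemma norm_mult_diag_mat_sq:
  fixes G :: "real^'r^'k"
  shows "(norm (G ** diag_mat c))\<^sup>2 = (\<Sum>i\<in>UNIV. (c i)\<^sup>2 * (norm (column i G))\<^sup>2)"
  unfolding norm_column_sq
  apply (simp add: power2_norm_eq_inner inner_vec_def matrix_mult_diag_mat_nth sum_distrib_left)
  apply (subst sum.swap)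
  apply (simp add: power2_eq_square mult_ac)
  done

lemma coef_a_eq_norm_column: "coef_a F V i = norm (column i (F ** transpose V))"
  by (simp add: coef_a_def norm_eq_sqrt_inner inner_vec_def column_def matrix_matrix_mult_def
      transpose_def power2_eq_square)

lemma weighted_chebyshev_identity:
  fixes w u x :: "'i::finite \<Rightarrow> real"
  shows "2 * ((\<Sum>i\<in>UNIV. u i * x i * w i) * (\<Sum>i\<in>UNIV. w i)
              - (\<Sum>i\<in>UNIV. x i * w i) * (\<Sum>i\<in>UNIV. u i * w i))
     = (\<Sum>i\<in>UNIV. \<Sum>j\<in>UNIV. w i * w j * ((u i - u j) * (x i - x j)))"
proof -
  let ?d = "\<lambda>i j. u i * x i * w i * w j - x i * w i * (u j * w j)"
  have "w i * w j * ((u i - u j) * (x i - x j)) = ?d i j + ?d j i" for i j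
    by (simp add: algebra_simps)
  then have "(\<Sum>i\<in>UNIV. \<Sum>j\<in>UNIV. w i * w j * ((u i - u j) * (x i - x j)))
      = (\<Sum>i\<in>UNIV. \<Sum>j\<in>UNIV. ?d i j) + (\<Sum>i\<in>UNIV. \<Sum>j\<in>UNIV. ?d j i)"
    by (simp add: sum.distrib)
  also have "(\<Sum>i\<in>UNIV. \<Sum>j\<in>UNIV. ?d j i) = (\<Sum>i\<in>UNIV. \<Sum>j\<in>UNIV. ?d i j)"
    by (rule sum.swap)
  also have "(\<Sum>i\<in>UNIV. \<Sum>j\<in>UNIV. ?d i j)
      = (\<Sum>i\<in>UNIV. u i * x i * w i) * (\<Sum>i\<in>UNIV. w i)
        - (\<Sum>i\<in>UNIV. x i * w i) * (\<Sum>i\<in>UNIV. u i * w i)"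
    by (simp add: sum_subtractf sum_product)
  finally show ?thesis by simp
qed

lemma weighted_chebyshev_strict:
  fixes w u x :: "'i::finite \<Rightarrow> real"
  assumes opposite: "\<And>i j. (u i - u j) * (x i - x j) \<le> 0"
    and w_nonneg: "\<And>i. 0 \<le> w i" and "0 < w a" "0 < w b"
    and strict: "(u a - u b) * (x a - x b) < 0"
  shows "(\<Sum>i\<in>UNIV. u i * x i * w i) * (\<Sum>i\<in>UNIV. w i)
       < (\<Sum>i\<in>UNIV. x i * w i) * (\<Sum>i\<in>UNIV. u i * w i)"
proof -
  define e where "e i j = - (w i * w j * ((u i - u j) * (x i - x j)))" for i j
  have e_nonneg: "0 \<le> e i j" for i j
    using opposite[of i j] w_nonneg[of i] w_nonneg[of j]
    by (simp add: e_def mult_nonneg_nonpos)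
  have "0 < e a b" using strict \<open>0 < w a\<close> \<open>0 < w b\<close> by (simp add: e_def mult_pos_neg)
  then have "0 < (\<Sum>j\<in>UNIV. e a j)" by (intro sum_pos2[of UNIV b]) (auto intro: e_nonneg)
  then have "0 < (\<Sum>i\<in>UNIV. \<Sum>j\<in>UNIV. e i j)"
    by (intro sum_pos2[of UNIV a "\<lambda>i. \<Sum>j\<in>UNIV. e i j"]) (auto intro: sum_nonneg e_nonneg)
  then show ?thesis
    unfolding e_def sum_negf weighted_chebyshev_identity[symmetric] by simp
qed

lemma weighted_chebyshev_eq:
  fixes w u x :: "'i::finite \<Rightarrow> real"
  assumes "\<And>i j. w i \<noteq> 0 \<Longrightarrow> w j \<noteq> 0 \<Longrightarrow> (u i - u j) * (x i - x j) = 0"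
  shows "(\<Sum>i\<in>UNIV. u i * x i * w i) * (\<Sum>i\<in>UNIV. w i)
       = (\<Sum>i\<in>UNIV. x i * w i) * (\<Sum>i\<in>UNIV. u i * w i)"
proof -
  have zero: "w i * w j * ((u i - u j) * (x i - x j)) = 0" for i j
    using assms[of i j] by auto
  have "(\<Sum>i\<in>UNIV. \<Sum>j\<in>UNIV. w i * w j * ((u i - u j) * (x i - x j))) = 0"
    by (simp add: zero)
  then show ?thesis unfolding weighted_chebyshev_identity[symmetric] by simp
qed

definition ridge_filter :: "real \<Rightarrow> real \<Rightarrow> real" where
  "ridge_filter lam s = s\<^sup>2 / (s\<^sup>2 + lam)"

lemma ridge_filter_zero [simp]: "s \<noteq> 0 \<Longrightarrow> ridge_filter 0 s = 1"
  by (simp add: ridge_filter_def)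

lemma ridge_filter_pos: "s \<noteq> 0 \<Longrightarrow> 0 \<le> lam \<Longrightarrow> 0 < ridge_filter lam s"
  by (simp add: ridge_filter_def add_pos_nonneg)

lemma ridge_filter_less_one: "0 < lam \<Longrightarrow> ridge_filter lam s < 1"
  by (simp add: ridge_filter_def add_nonneg_pos)

lemma abs_ridge_filter_less_one: "0 < lam \<Longrightarrow> s \<noteq> 0 \<Longrightarrow> \<bar>ridge_filter lam s\<bar> < 1"
  using ridge_filter_pos[of s lam] ridge_filter_less_one[of lam s] by simp

lemma ridge_filter_strict_mono:
  assumes "0 < lam" "0 \<le> s" "s < s'"
  shows "ridge_filter lam s < ridge_filter lam s'"
proof -
  have "s\<^sup>2 < s'\<^sup>2" using assms by (simp add: power_strict_mono)
  then have "lam / (s'\<^sup>2 + lam) < lam / (s\<^sup>2 + lam)"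
    using assms(1) by (intro divide_strict_left_mono) (auto intro!: add_nonneg_pos mult_pos_pos)
  moreover have "ridge_filter lam r = 1 - lam / (r\<^sup>2 + lam)" for r
  proof -
    have "0 < r\<^sup>2 + lam" using assms(1) by (simp add: add_nonneg_pos)
    then show ?thesis by (simp add: ridge_filter_def field_simps)
  qed
  ultimately show ?thesis by simp
qed

lemma sum_sq_mult_weight_pos:
  fixes p w :: "'i::finite \<Rightarrow> real"
  assumes "\<And>i. 0 \<le> w i" "0 < w a" "p a \<noteq> 0"
  shows "0 < (\<Sum>i\<in>UNIV. (p i)\<^sup>2 * w i)"
  using assms by (intro sum_pos2[of UNIV a]) auto

lemma sum_sq_shrink_less:
  fixes t x w :: "'i::finite \<Rightarrow> real"
  assumes "\<And>i. 0 \<le> w i" "\<And>i. \<bar>t i\<bar> \<le> 1" "0 < w a" "\<bar>t a\<bar> < 1" "x a \<noteq> 0"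
  shows "(\<Sum>i\<in>UNIV. (t i * x i)\<^sup>2 * w i) < (\<Sum>i\<in>UNIV. (x i)\<^sup>2 * w i)"
proof (rule sum_strict_mono_ex1)
  have "(t i)\<^sup>2 \<le> 1" for i using assms(2)[of i] by (simp add: abs_square_le_1)
  then show "\<forall>i\<in>UNIV. (t i * x i)\<^sup>2 * w i \<le> (x i)\<^sup>2 * w i"
    using assms(1) by (auto simp: power_mult_distrib intro!: mult_right_mono mult_left_le_one_le)
  have "(t a)\<^sup>2 < 1" using assms(4) by (simp add: abs_square_less_1)
  then show "\<exists>i\<in>UNIV. (t i * x i)\<^sup>2 * w i < (x i)\<^sup>2 * w i"
    using assms(3,5) by (intro bexI[of _ a]) (auto simp: power_mult_distrib)
qed auto

lemma weighted_filter_ratio_less: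
  fixes \<sigma> w :: "'i::finite \<Rightarrow> real" and \<phi> :: "real \<Rightarrow> real"
  assumes \<sigma>_pos: "\<And>i. 0 < \<sigma> i"
    and \<phi>_pos: "\<And>s. 0 < s \<Longrightarrow> 0 < \<phi> s"
    and \<phi>_mono: "\<And>s s'. 0 < s \<Longrightarrow> s < s' \<Longrightarrow> \<phi> s < \<phi> s'"
    and w_nonneg: "\<And>i. 0 \<le> w i" and "0 < w a" "0 < w b" "\<sigma> a \<noteq> \<sigma> b"
  shows "(\<Sum>i\<in>UNIV. (\<phi> (\<sigma> i) / \<sigma> i)\<^sup>2 * w i) / (\<Sum>i\<in>UNIV. (\<phi> (\<sigma> i))\<^sup>2 * w i)
       < (\<Sum>i\<in>UNIV. (1 / \<sigma> i)\<^sup>2 * w i) / (\<Sum>i\<in>UNIV. w i)"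
proof -
  define u where "u i = (\<phi> (\<sigma> i))\<^sup>2" for i
  define x where "x i = (1 / \<sigma> i)\<^sup>2" for i
  have ordered: "(u i - u j) * (x i - x j) < 0" if "\<sigma> i < \<sigma> j" for i j
  proof -
    have "u i < u j"
      unfolding u_def using \<phi>_mono[OF \<sigma>_pos that] \<phi>_pos[OF \<sigma>_pos, of i]
      by (intro power_strict_mono) auto
    moreover have "x j < x i"
      unfolding x_def using that \<sigma>_pos[of i] by (simp add: power_strict_mono divide_strict_left_mono)
    ultimately show ?thesis by (simp add: mult_neg_pos)
  qed
  have opposite_strict: "(u i - u j) * (x i - x j) < 0" if "\<sigma> i \<noteq> \<sigma> j" for i j
  proof (cases "\<sigma> i < \<sigma> j")
    case False
    with that have "(u j - u i) * (x j - x i) < 0" by (intro ordered) simp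
    then show ?thesis by (simp add: algebra_simps)
  qed (rule ordered)
  have opposite: "(u i - u j) * (x i - x j) \<le> 0" for i j
    using opposite_strict[of i j] by (cases "\<sigma> i = \<sigma> j") (auto simp: u_def x_def)
  have "(\<Sum>i\<in>UNIV. u i * x i * w i) * (\<Sum>i\<in>UNIV. w i)
      < (\<Sum>i\<in>UNIV. x i * w i) * (\<Sum>i\<in>UNIV. u i * w i)"
    using opposite w_nonneg \<open>0 < w a\<close> \<open>0 < w b\<close> opposite_strict[OF \<open>\<sigma> a \<noteq> \<sigma> b\<close>]
    by (rule weighted_chebyshev_strict)
  moreover have "0 < (\<Sum>i\<in>UNIV. u i * w i)"
    unfolding u_def using w_nonneg \<open>0 < w a\<close> \<phi>_pos[OF \<sigma>_pos, of a]
    by (intro sum_sq_mult_weight_pos) auto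
  moreover have "0 < (\<Sum>i\<in>UNIV. w i)" using w_nonneg \<open>0 < w a\<close> by (intro sum_pos2[of UNIV a]) auto
  moreover have "(\<Sum>i\<in>UNIV. (\<phi> (\<sigma> i) / \<sigma> i)\<^sup>2 * w i) = (\<Sum>i\<in>UNIV. u i * x i * w i)"
    unfolding u_def x_def by (simp add: power_divide)
  ultimately show ?thesis
    unfolding u_def[symmetric] x_def[symmetric] by (simp add: divide_simps)
qed

lemma weighted_filter_ratio_eq:
  fixes \<sigma> w :: "'i::finite \<Rightarrow> real" and \<phi> :: "real \<Rightarrow> real"
  assumes \<sigma>_pos: "\<And>i. 0 < \<sigma> i" and \<phi>_pos: "\<And>s. 0 < s \<Longrightarrow> 0 < \<phi> s"
    and w_nonneg: "\<And>i. 0 \<le> w i" and "0 < w a"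
    and \<sigma>_const: "\<And>i j. w i \<noteq> 0 \<Longrightarrow> w j \<noteq> 0 \<Longrightarrow> \<sigma> i = \<sigma> j"
  shows "(\<Sum>i\<in>UNIV. (\<phi> (\<sigma> i) / \<sigma> i)\<^sup>2 * w i) / (\<Sum>i\<in>UNIV. (\<phi> (\<sigma> i))\<^sup>2 * w i)
       = (\<Sum>i\<in>UNIV. (1 / \<sigma> i)\<^sup>2 * w i) / (\<Sum>i\<in>UNIV. w i)"
proof -
  define u where "u i = (\<phi> (\<sigma> i))\<^sup>2" for i
  define x where "x i = (1 / \<sigma> i)\<^sup>2" for i
  have "(\<Sum>i\<in>UNIV. u i * x i * w i) * (\<Sum>i\<in>UNIV. w i)
      = (\<Sum>i\<in>UNIV. x i * w i) * (\<Sum>i\<in>UNIV. u i * w i)"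
    by (rule weighted_chebyshev_eq) (metis u_def x_def \<sigma>_const diff_self mult_zero_left)
  moreover have "0 < (\<Sum>i\<in>UNIV. u i * w i)"
    unfolding u_def using w_nonneg \<open>0 < w a\<close> \<phi>_pos[OF \<sigma>_pos, of a]
    by (intro sum_sq_mult_weight_pos) auto
  moreover have "0 < (\<Sum>i\<in>UNIV. w i)" using w_nonneg \<open>0 < w a\<close> by (intro sum_pos2[of UNIV a]) auto
  moreover have "(\<Sum>i\<in>UNIV. (\<phi> (\<sigma> i) / \<sigma> i)\<^sup>2 * w i) = (\<Sum>i\<in>UNIV. u i * x i * w i)"
    unfolding u_def x_def by (simp add: power_divide)
  ultimately show ?thesis
    unfolding u_def[symmetric] x_def[symmetric] by (simp add: divide_simps)
qed

locale thin_svd =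
  fixes A :: "real^'n::finite^'r::finite" and U :: "real^'r^'r" and V :: "real^'n^'r"
    and \<sigma> :: "'r \<Rightarrow> real"
  assumes U_orthogonal: "transpose U ** U = mat 1" "U ** transpose U = mat 1"
    and V_orthonormal_rows: "V ** transpose V = mat 1"
    and svd: "A = U ** diag_mat \<sigma> ** V"
    and sigma_pos: "0 < \<sigma> i"
begin

definition ridge :: "real^'n^'k \<Rightarrow> real \<Rightarrow> real^'r^'k" where
  "ridge F lam = F ** transpose A ** matrix_inv (A ** transpose A + lam *\<^sub>R mat 1)"

lemma sigma_nonzero [simp]: "\<sigma> i \<noteq> 0"
  using sigma_pos[of i] by simp

lemma mult_orthogonal_cancel [simp]:
  "M ** transpose U ** U = M" "M ** U ** transpose U = M" "M ** V ** transpose V = M"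
  by (simp_all add: U_orthogonal V_orthonormal_rows flip: matrix_mul_assoc)

lemma transpose_svd: "transpose A = transpose V ** diag_mat \<sigma> ** transpose U"
  by (simp add: svd matrix_transpose_mul matrix_mul_assoc)

lemma gram_svd: "A ** transpose A = U ** diag_mat (\<lambda>i. (\<sigma> i)\<^sup>2) ** transpose U"
  unfolding transpose_svd
  by (simp add: svd matrix_mul_assoc matrix_mult_diag_mat_mult_diag_mat power2_eq_square)

lemma matrix_inv_conj_diag_mat:
  assumes "\<And>i. s i \<noteq> 0"
  shows "matrix_inv (U ** diag_mat s ** transpose U) = U ** diag_mat (\<lambda>i. 1 / s i) ** transpose U"
  by (rule matrix_inv_eqI)
    (simp_all add: assms matrix_mul_assoc matrix_mult_diag_mat_mult_diag_mat diag_mat_const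
      U_orthogonal)

lemma ridge_svd:
  assumes "0 \<le> lam"
  shows "ridge F lam
    = F ** transpose V ** diag_mat (\<lambda>i. ridge_filter lam (\<sigma> i) / \<sigma> i) ** transpose U"
proof -
  have "U ** (lam *\<^sub>R mat 1) ** transpose U = lam *\<^sub>R mat 1"
    by (simp add: matrix_scalar_ac U_orthogonal flip: scalar_matrix_assoc)
  then have "A ** transpose A + lam *\<^sub>R mat 1
      = U ** (diag_mat (\<lambda>i. (\<sigma> i)\<^sup>2) + lam *\<^sub>R mat 1) ** transpose U"
    by (simp add: gram_svd matrix_add_ldistrib matrix_add_rdistrib)
  also have "\<dots> = U ** diag_mat (\<lambda>i. (\<sigma> i)\<^sup>2 + lam) ** transpose U"
    by (simp add: diag_mat_add_scaleR_mat)
  finally have regularized_gram: "A ** transpose A + lam *\<^sub>R mat 1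
      = U ** diag_mat (\<lambda>i. (\<sigma> i)\<^sup>2 + lam) ** transpose U" .
  have "0 < (\<sigma> i)\<^sup>2 + lam" for i
    using assms by (intro add_pos_nonneg) simp_all
  then have "(\<sigma> i)\<^sup>2 + lam \<noteq> 0" for i
    by (metis less_irrefl)
  then show ?thesis
    unfolding ridge_def regularized_gram
    by (simp add: matrix_inv_conj_diag_mat transpose_svd matrix_mul_assoc
        matrix_mult_diag_mat_mult_diag_mat ridge_filter_def power2_eq_square)
qed

lemma ridge_mult_A:
  assumes "0 \<le> lam"
  shows "ridge F lam ** A = F ** transpose V ** diag_mat (\<lambda>i. ridge_filter lam (\<sigma> i)) ** V"
  unfolding ridge_svd[OF assms]
  by (simp add: svd matrix_mul_assoc matrix_mult_diag_mat_mult_diag_mat)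

lemma frob_ridge_sq:
  assumes "0 \<le> lam"
  shows "(frob (ridge F lam))\<^sup>2 = (\<Sum>i\<in>UNIV. (ridge_filter lam (\<sigma> i) / \<sigma> i)\<^sup>2 * (coef_a F V i)\<^sup>2)"
proof -
  have Ut_orthonormal_rows: "transpose U ** transpose (transpose U) = mat 1"
    by (simp add: U_orthogonal)
  show ?thesis
    unfolding frob_def ridge_svd[OF assms] norm_matrix_mult_orthonormal_rows[OF Ut_orthonormal_rows]
      norm_mult_diag_mat_sq coef_a_eq_norm_column ..
qed

lemma frob_ridge_mult_A_sq:
  assumes "0 \<le> lam"
  shows "(frob (ridge F lam ** A))\<^sup>2 = (\<Sum>i\<in>UNIV. (ridge_filter lam (\<sigma> i))\<^sup>2 * (coef_a F V i)\<^sup>2)"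
  unfolding frob_def ridge_mult_A[OF assms] norm_matrix_mult_orthonormal_rows[OF V_orthonormal_rows]
    norm_mult_diag_mat_sq coef_a_eq_norm_column ..

lemma abs_fit_err_ridge:
  assumes "0 \<le> lam"
  shows "abs_fit_err F A (ridge F lam)
    = (\<Sum>i\<in>UNIV. (1 - ridge_filter lam (\<sigma> i))\<^sup>2 * (coef_a F V i)\<^sup>2)
      + (norm (F - F ** transpose V ** V))\<^sup>2"
proof -
  define G where "G = F ** transpose V"
  define t where "t i = ridge_filter lam (\<sigma> i)" for i
  have "G ** diag_mat (\<lambda>i. 1 - t i) ** V = G ** V - G ** diag_mat t ** V"
    by (simp add: diag_mat_diff[symmetric] diag_mat_const matrix_diff_ldistrib matrix_diff_rdistrib)
  then have split: "F - G ** diag_mat t ** V = G ** diag_mat (\<lambda>i. 1 - t i) ** V + (F - G ** V)"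
    by simp
  have "(F - G ** V) ** transpose V = 0"
    by (simp add: G_def matrix_diff_rdistrib)
  then show ?thesis
    unfolding abs_fit_err_def frob_def ridge_mult_A[OF assms] G_def[symmetric] t_def[symmetric] split
    by (simp add: norm_sq_add_orthogonal_rows V_orthonormal_rows norm_mult_diag_mat_sq
        coef_a_eq_norm_column G_def)
qed

lemma ex_coef_a_nonzero:
  assumes "F ** transpose A \<noteq> 0"
  shows "\<exists>i. coef_a F V i \<noteq> 0"
proof (rule ccontr)
  assume "\<not> (\<exists>i. coef_a F V i \<noteq> 0)"
  then have "column i (F ** transpose V) = 0" for i
    by (simp add: coef_a_eq_norm_column)
  then have "F ** transpose V = 0"
    by (simp add: vec_eq_iff column_def)
  then have "F ** transpose A = 0"
    by (simp add: transpose_svd matrix_mul_assoc)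
  with assms show False ..
qed

lemma ridge_zero_quantities:
  "abs_fit_err F A (ridge F 0) = (norm (F - F ** transpose V ** V))\<^sup>2"
  "(frob (ridge F 0 ** A))\<^sup>2 = (\<Sum>i\<in>UNIV. (coef_a F V i)\<^sup>2)"
  "(frob (ridge F 0))\<^sup>2 = (\<Sum>i\<in>UNIV. (1 / \<sigma> i)\<^sup>2 * (coef_a F V i)\<^sup>2)"
  by (simp_all add: abs_fit_err_ridge frob_ridge_mult_A_sq frob_ridge_sq)

lemma abs_fit_err_ridge_gt:
  assumes "0 < lam" and "coef_a F V a \<noteq> 0"
  shows "abs_fit_err F A (ridge F 0) < abs_fit_err F A (ridge F lam)"
proof -
  have "0 < (\<Sum>i\<in>UNIV. (1 - ridge_filter lam (\<sigma> i))\<^sup>2 * (coef_a F V i)\<^sup>2)"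
    using assms ridge_filter_less_one[OF assms(1), of "\<sigma> a"]
    by (intro sum_sq_mult_weight_pos[of _ a]) auto
  then show ?thesis
    using assms(1) by (simp add: abs_fit_err_ridge ridge_zero_quantities)
qed

lemma frob_ridge_mult_A_sq_pos:
  assumes "0 \<le> lam" and "coef_a F V a \<noteq> 0"
  shows "0 < (frob (ridge F lam ** A))\<^sup>2"
  unfolding frob_ridge_mult_A_sq[OF assms(1)]
  using assms ridge_filter_pos[OF sigma_nonzero assms(1), of a]
  by (intro sum_sq_mult_weight_pos[of _ a]) auto

lemma frob_ridge_mult_A_sq_lt:
  assumes "0 < lam" and "coef_a F V a \<noteq> 0"
  shows "(frob (ridge F lam ** A))\<^sup>2 < (frob (ridge F 0 ** A))\<^sup>2"
proof -
  have "\<bar>ridge_filter lam (\<sigma> i)\<bar> < 1" for i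
    using assms(1) by (simp add: abs_ridge_filter_less_one)
  then have "(\<Sum>i\<in>UNIV. (ridge_filter lam (\<sigma> i) * 1)\<^sup>2 * (coef_a F V i)\<^sup>2)
      < (\<Sum>i\<in>UNIV. 1\<^sup>2 * (coef_a F V i)\<^sup>2)"
    using assms(2) by (intro sum_sq_shrink_less[of _ _ a]) (auto intro: less_imp_le)
  then show ?thesis
    using assms(1) by (simp add: frob_ridge_mult_A_sq ridge_zero_quantities)
qed

lemma fit_err_ridge_gt:
  assumes "0 < lam" and "coef_a F V a \<noteq> 0"
  shows "fit_err F A (ridge F 0) < fit_err F A (ridge F lam)"
proof -
  have pos: "0 < (frob (ridge F lam ** A))\<^sup>2"
    using assms by (intro frob_ridge_mult_A_sq_pos[of _ _ a]) auto
  have lt: "(frob (ridge F lam ** A))\<^sup>2 < (frob (ridge F 0 ** A))\<^sup>2"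
    using assms by (rule frob_ridge_mult_A_sq_lt)
  have "abs_fit_err F A (ridge F 0) / (frob (ridge F 0 ** A))\<^sup>2
      \<le> abs_fit_err F A (ridge F 0) / (frob (ridge F lam ** A))\<^sup>2"
    using lt mult_pos_pos[OF order.strict_trans[OF pos lt] pos]
    by (intro divide_left_mono) (simp_all add: abs_fit_err_def)
  also have "\<dots> < abs_fit_err F A (ridge F lam) / (frob (ridge F lam ** A))\<^sup>2"
    using assms pos by (intro divide_strict_right_mono abs_fit_err_ridge_gt)
  finally show ?thesis
    unfolding fit_err_def by simp
qed

lemma abs_spec_risk_ridge_lt:
  assumes "0 < lam" and "coef_a F V a \<noteq> 0"
  shows "abs_spec_risk (ridge F lam) < abs_spec_risk (ridge F 0)"
proof -
  have "\<bar>ridge_filter lam (\<sigma> i)\<bar> < 1" for i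
    using assms(1) by (simp add: abs_ridge_filter_less_one)
  then have "(\<Sum>i\<in>UNIV. (ridge_filter lam (\<sigma> i) * (1 / \<sigma> i))\<^sup>2 * (coef_a F V i)\<^sup>2)
      < (\<Sum>i\<in>UNIV. (1 / \<sigma> i)\<^sup>2 * (coef_a F V i)\<^sup>2)"
    using assms(2) by (intro sum_sq_shrink_less[of _ _ a]) (auto intro: less_imp_le)
  then show ?thesis
    unfolding abs_spec_risk_def using assms(1)
    by (simp add: frob_ridge_sq ridge_zero_quantities)
qed

lemma A_nonzero: "A \<noteq> 0"
proof
  assume "A = 0"
  then have "transpose U ** (A ** transpose A) ** U = 0" by simp
  then have "diag_mat (\<lambda>i. (\<sigma> i)\<^sup>2) = 0"
    by (simp add: gram_svd matrix_mul_assoc U_orthogonal)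
  then have "diag_mat (\<lambda>i. (\<sigma> i)\<^sup>2) $ i $ i = 0" for i
    by simp
  then show False
    by (simp add: diag_mat_def)
qed

lemma spec_risk_ridge_lt:
  assumes "0 < lam" and "coef_a F V a \<noteq> 0" "coef_a F V b \<noteq> 0" "\<sigma> a \<noteq> \<sigma> b"
  shows "spec_risk A (ridge F lam) < spec_risk A (ridge F 0)"
proof -
  have "(frob (ridge F lam))\<^sup>2 / (frob (ridge F lam ** A))\<^sup>2
      < (frob (ridge F 0))\<^sup>2 / (frob (ridge F 0 ** A))\<^sup>2"
    unfolding frob_ridge_sq[OF less_imp_le[OF assms(1)]]
      frob_ridge_mult_A_sq[OF less_imp_le[OF assms(1)]] ridge_zero_quantities
    using assms
    by (intro weighted_filter_ratio_less[where w = "\<lambda>i. (coef_a F V i)\<^sup>2" and a = a and b = b])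
      (auto simp: sigma_pos ridge_filter_pos ridge_filter_strict_mono)
  moreover have "0 < (frob A)\<^sup>2"
    using A_nonzero by (simp add: frob_def)
  ultimately show ?thesis
    unfolding spec_risk_def times_divide_eq_left[symmetric] by (rule mult_strict_right_mono)
qed

lemma spec_risk_ridge_eq:
  assumes "0 < lam" and "coef_a F V a \<noteq> 0"
    and "\<And>i j. coef_a F V i \<noteq> 0 \<Longrightarrow> coef_a F V j \<noteq> 0 \<Longrightarrow> \<sigma> i = \<sigma> j"
  shows "spec_risk A (ridge F lam) = spec_risk A (ridge F 0)"
proof -
  have "(frob (ridge F lam))\<^sup>2 / (frob (ridge F lam ** A))\<^sup>2
      = (frob (ridge F 0))\<^sup>2 / (frob (ridge F 0 ** A))\<^sup>2"
    unfolding frob_ridge_sq[OF less_imp_le[OF assms(1)]]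
      frob_ridge_mult_A_sq[OF less_imp_le[OF assms(1)]] ridge_zero_quantities
    using assms(1,2)
    by (intro weighted_filter_ratio_eq[where w = "\<lambda>i. (coef_a F V i)\<^sup>2" and a = a])
      (auto simp: sigma_pos ridge_filter_pos intro: assms(3))
  then show ?thesis
    unfolding spec_risk_def times_divide_eq_left[symmetric] by simp
qed

end

theorem theorem8:
  fixes A :: "((real, 'n::finite) vec, 'r::{finite,linorder}) vec"
    and U :: "((real, 'r) vec, 'r) vec"
    and V :: "((real, 'n) vec, 'r) vec"
    and \<sigma> :: "'r \<Rightarrow> real"
    and F :: "real^'n^'k"
    and lam :: real
  assumes r_le_n: "CARD('r) \<le> CARD('n)"
    and full_row_rank: "rank A = CARD('r)"
    and U_orth: "transpose U ** U = mat 1" "U ** transpose U = mat 1"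
    and V_rows_orthonormal: "V ** transpose V = mat 1"
    and svd: "A = U ** diag_mat \<sigma> ** V"
    and sigma_sorted: "\<And>i j. i \<le> j \<Longrightarrow> \<sigma> j \<le> \<sigma> i"
    and sigma_pos: "\<And>i. \<sigma> i > 0"
    and FA_nz: "F ** transpose A \<noteq> 0"
    and lam_pos: "lam > 0"
  defines "Dstar \<equiv> F ** transpose A ** matrix_inv (A ** transpose A)"
    and "Dtil \<equiv> F ** transpose A ** matrix_inv (A ** transpose A + lam *\<^sub>R mat 1)"
    and "\<Omega> \<equiv> {j. coef_a F V j \<noteq> 0}"
  shows "abs_fit_err F A Dtil > abs_fit_err F A Dstar
       \<and> fit_err F A Dtil > fit_err F A Dstar
       \<and> abs_spec_risk Dtil < abs_spec_risk Dstar
       \<and> (if (\<exists>i\<in>\<Omega>. \<exists>j\<in>\<Omega>. \<sigma> i \<noteq> \<sigma> j)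
         then spec_risk A Dtil < spec_risk A Dstar
         else spec_risk A Dtil = spec_risk A Dstar)"
proof -
  interpret thin_svd A U V \<sigma>
    using U_orth V_rows_orthonormal svd sigma_pos by unfold_locales
  have D: "Dstar = ridge F 0" "Dtil = ridge F lam"
    unfolding Dstar_def Dtil_def ridge_def by simp_all
  obtain a where a: "coef_a F V a \<noteq> 0"
    using ex_coef_a_nonzero[OF FA_nz] ..
  have spectral_risk: "if (\<exists>i\<in>\<Omega>. \<exists>j\<in>\<Omega>. \<sigma> i \<noteq> \<sigma> j)
      then spec_risk A Dtil < spec_risk A Dstar else spec_risk A Dtil = spec_risk A Dstar"
  proof (cases "\<exists>i\<in>\<Omega>. \<exists>j\<in>\<Omega>. \<sigma> i \<noteq> \<sigma> j")
    case True
    then obtain i j where "coef_a F V i \<noteq> 0" "coef_a F V j \<noteq> 0" "\<sigma> i \<noteq> \<sigma> j"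
      unfolding \<Omega>_def by blast
    then have "spec_risk A Dtil < spec_risk A Dstar"
      unfolding D by (rule spec_risk_ridge_lt[OF lam_pos])
    then show ?thesis by (simp only: if_P[OF True])
  next
    case False
    then have "\<sigma> i = \<sigma> j" if "coef_a F V i \<noteq> 0" "coef_a F V j \<noteq> 0" for i j
      using that unfolding \<Omega>_def by blast
    then have "spec_risk A Dtil = spec_risk A Dstar"
      unfolding D by (rule spec_risk_ridge_eq[OF lam_pos a])
    then show ?thesis by (simp only: if_not_P[OF False])
  qed
  show ?thesis
    using abs_fit_err_ridge_gt[OF lam_pos a] fit_err_ridge_gt[OF lam_pos a]
      abs_spec_risk_ridge_lt[OF lam_pos a] spectral_risk
    unfolding D by simp
qed

end
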